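(* Let $\mathcal{G}=(V,\mathit{Act},\mathcal{R})$ be a normed BPA system and $\gamma,\delta\in V^*$ with $R_\gamma=R_\delta$. Then for every $A\in V$ we have $R_{A\gamma}=R_{A\delta}$, and for all $\alpha,\beta\in V^*$ we have $\alpha\gamma\sim\beta\gamma$ iff $\alpha\delta\sim\beta\delta$. Moreover, for each $A\in V$ and $\gamma\in V^*$, the set of strings $\alpha\in V^*$ such that (a) $\alpha\gamma\sim A\gamma$ and (b) $\alpha$ is a redundancy-free prefix of $\alpha\gamma$ is finite and nonempty, and it depends only on $R_\gamma$ (not on $\gamma$ itself). Consequently the canonical transducer $\mathcal{T}^\mathcal{G}$ is well defined.
   Context: A BPA system $\mathcal{G}=(V,\mathit{Act},\mathcal{R})$: finite variables $V$, finite actions (possibly containing silent $\tau$), rules $A\xrightarrow{a}\alpha$; LTS $\mathcal{L}_\mathcal{G}$ on $V^*$ with $A\beta\xrightarrow{a}\alpha\beta$ for rules $A\xrightarrow{a}\alpha$. Normed: each variable can reach $\varepsilon$. $\sim$ is branching bisimilarity in $\mathcal{L}_\mathcal{G}$ (largest relation $\mathcal{B}$ such that for $(s,t)\in\mathcal{B}$ each move $s\xrightarrow{a}s'$ is matched by $a=\tau$ with $(s',t)\in\mathcal{B}$, or by $t=t_0\xrightarrow{\tau}\cdots\xrightarrow{\tau}t_k\xrightarrow{a}t'$ with $(s',t')\in\mathcal{B}$, $(s,t_i)\in\mathcal{B}$ for $i\in[1,k]$; and symmetrically). $R_\gamma=\{X\in V\mid X\gamma\sim\gamma\}$. The prefix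 $\alpha$ of $\alpha\gamma$ is redundancy-free if it cannot be written as $\alpha=\delta X\beta$ with $X\beta\gamma\sim\beta\gamma$. Fix a linear order on $V$; $\alpha$ is lexicographically smaller than $\beta$ if $\alpha$ is a proper suffix of $\beta$, or $\alpha=\alpha'A\gamma$, $\beta=\beta'B\gamma$ with $A<B$. The canonical transducer $\mathcal{T}^\mathcal{G}=(Q,V,\Delta,q_0)$: $Q=\{R_\gamma\mid\gamma\in V^*\}$, $q_0=R_\varepsilon$, and $\Delta(R_\gamma,A)=(R_{A\gamma},\alpha)$ where $\alpha$ is the lexicographically smallest among the longest strings satisfying (a) and (b) above. *)

theory Defs
  imports Main
begin

(* A BPA system: variables are the elements of the finite type 'v (so V^* = 'v list),
   actions of type 'a with a distinguished silent action tau,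
   rules R :: ('v * 'a * 'v list) set, a rule (A,a,alpha) meaning A --a--> alpha. *)

definition bpa_step :: "('v \<times> 'a \<times> 'v list) set \<Rightarrow> 'v list \<Rightarrow> 'a \<Rightarrow> 'v list \<Rightarrow> bool" where
  "bpa_step R s a t \<longleftrightarrow> (\<exists>A \<beta> \<alpha>. s = A # \<beta> \<and> (A, a, \<alpha>) \<in> R \<and> t = \<alpha> @ \<beta>)"

definition normed :: "('v \<times> 'a \<times> 'v list) set \<Rightarrow> bool" where
  "normed R \<longleftrightarrow> (\<forall>A. (\<lambda>s t. \<exists>a. bpa_step R s a t)\<^sup>*\<^sup>* [A] [])"

(* tau_path R tau P t t'' : t = t_0 --tau--> ... --tau--> t_k = t'' with P t_i for i in [1,k] *)
inductive tau_path :: "('v \<times> 'a \<times> 'v list) set \<Rightarrow> 'a \<Rightarrow> ('v list \<Rightarrow> bool) \<Rightarrow> 'v list \<Rightarrow> 'v list \<Rightarrow> bool"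
  for R tau P where
  tp_refl: "tau_path R tau P t t"
| tp_step: "bpa_step R t tau u \<Longrightarrow> P u \<Longrightarrow> tau_path R tau P u w \<Longrightarrow> tau_path R tau P t w"

definition bb_transfer :: "('v \<times> 'a \<times> 'v list) set \<Rightarrow> 'a \<Rightarrow> ('v list \<times> 'v list) set \<Rightarrow> bool" where
  "bb_transfer R tau B \<longleftrightarrow>
     (\<forall>s t. (s, t) \<in> B \<longrightarrow> (\<forall>a s'. bpa_step R s a s' \<longrightarrow>
        (a = tau \<and> (s', t) \<in> B) \<or>
        (\<exists>t'' t'. tau_path R tau (\<lambda>u. (s, u) \<in> B) t t'' \<and> bpa_step R t'' a t' \<and> (s', t') \<in> B)))"

definition branching_bisim :: "('v \<times> 'a \<times> 'v list) set \<Rightarrow> 'a \<Rightarrow> ('v list \<times> 'v list) set \<Rightarrow> bool" where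
  "branching_bisim R tau B \<longleftrightarrow> bb_transfer R tau B \<and> bb_transfer R tau (B\<inverse>)"

definition bbsim :: "('v \<times> 'a \<times> 'v list) set \<Rightarrow> 'a \<Rightarrow> 'v list \<Rightarrow> 'v list \<Rightarrow> bool" where
  "bbsim R tau s t \<longleftrightarrow> (\<exists>B. branching_bisim R tau B \<and> (s, t) \<in> B)"

definition Rset :: "('v \<times> 'a \<times> 'v list) set \<Rightarrow> 'a \<Rightarrow> 'v list \<Rightarrow> 'v set" where
  "Rset R tau \<gamma> = {X. bbsim R tau (X # \<gamma>) \<gamma>}"

definition redundancy_free :: "('v \<times> 'a \<times> 'v list) set \<Rightarrow> 'a \<Rightarrow> 'v list \<Rightarrow> 'v list \<Rightarrow> bool" where
  "redundancy_free R tau \<alpha> \<gamma> \<longleftrightarrow>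
     \<not> (\<exists>\<delta> X \<beta>. \<alpha> = \<delta> @ X # \<beta> \<and> bbsim R tau (X # \<beta> @ \<gamma>) (\<beta> @ \<gamma>))"

definition cand :: "('v \<times> 'a \<times> 'v list) set \<Rightarrow> 'a \<Rightarrow> 'v \<Rightarrow> 'v list \<Rightarrow> 'v list set" where
  "cand R tau A \<gamma> = {\<alpha>. bbsim R tau (\<alpha> @ \<gamma>) (A # \<gamma>) \<and> redundancy_free R tau \<alpha> \<gamma>}"

definition lex_smaller :: "'v::linorder list \<Rightarrow> 'v list \<Rightarrow> bool" where
  "lex_smaller \<alpha> \<beta> \<longleftrightarrow>
     (\<exists>\<delta>. \<delta> \<noteq> [] \<and> \<beta> = \<delta> @ \<alpha>) \<or>
     (\<exists>\<alpha>' \<beta>' A B \<gamma>. \<alpha> = \<alpha>' @ A # \<gamma> \<and> \<beta> = \<beta>' @ B # \<gamma> \<and> A < B)"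

definition transducer_output :: "('v::linorder \<times> 'a \<times> 'v list) set \<Rightarrow> 'a \<Rightarrow> 'v \<Rightarrow> 'v list \<Rightarrow> 'v list \<Rightarrow> bool" where
  "transducer_output R tau A \<gamma> \<alpha> \<longleftrightarrow>
     \<alpha> \<in> cand R tau A \<gamma> \<and>
     (\<forall>\<beta>\<in>cand R tau A \<gamma>. length \<beta> \<le> length \<alpha>) \<and>
     (\<forall>\<beta>\<in>cand R tau A \<gamma>. length \<beta> = length \<alpha> \<longrightarrow> \<beta> \<noteq> \<alpha> \<longrightarrow> lex_smaller \<alpha> \<beta>)"

end

theory Submission
  imports Defs "HOL-Library.List_Lexorder"
begin

text \<open>
  Branching bisimilarity \<open>\<sim>\<close> is an equivalence and a left congruence. Call the branching norm of
  a string the least number of non-inert steps on a path to \<open>\<epsilon>\<close>; it does not grow under \<open>\<sim>\<close> and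
  grows strictly whenever a prefix \<open>\<eta>\<close> with \<open>\<eta>\<gamma> \<not>\<sim> \<gamma>\<close> is put in front of \<open>\<gamma>\<close>. Hence
  \<open>\<zeta>\<gamma> \<sim> \<gamma>\<close> holds exactly when all variables of \<open>\<zeta>\<close> lie in \<open>R\<^sub>\<gamma>\<close>, so \<open>R\<^sub>\<gamma>\<close> determines which
  prefixes are absorbed by \<open>\<gamma>\<close>. With this, \<open>{(\<alpha>\<delta>, \<beta>\<delta>) | \<alpha>\<gamma> \<sim> \<beta>\<gamma>} \<union> \<sim>\<close> is a branching
  bisimulation whenever \<open>R\<^sub>\<gamma> = R\<^sub>\<delta>\<close>: a move of \<open>\<alpha>\<delta>\<close> with \<open>\<alpha>\<gamma> \<not>\<sim> \<gamma>\<close> happens inside \<open>\<alpha>\<close> and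
  is answered as in \<open>\<beta>\<gamma>\<close>, while if \<open>\<alpha>\<gamma> \<sim> \<gamma>\<close> both sides are absorbed. A redundancy-free \<open>\<alpha>\<close>
  raises the norm of \<open>\<gamma>\<close> by at least its length, so candidates for \<open>A\<gamma>\<close> are no longer than the
  norm of \<open>A\<gamma>\<close>; and \<open>\<epsilon>\<close> or \<open>A\<close> itself is always a candidate.
\<close>

lemma bpa_step_Nil [simp]: "\<not> bpa_step R [] a t"
  by (simp add: bpa_step_def)

lemma bpa_step_Cons: "bpa_step R (X # \<beta>) a t \<longleftrightarrow> (\<exists>\<alpha>. (X, a, \<alpha>) \<in> R \<and> t = \<alpha> @ \<beta>)"
  by (auto simp add: bpa_step_def)

lemma bpa_step_append: "bpa_step R s a t \<Longrightarrow> bpa_step R (s @ \<beta>) a (t @ \<beta>)"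
  by (auto simp add: bpa_step_def)

lemma bpa_step_append_nonempty:
  assumes "bpa_step R (\<zeta> @ \<gamma>) a u" "\<zeta> \<noteq> []"
  obtains \<zeta>' where "u = \<zeta>' @ \<gamma>" "\<And>\<delta>. bpa_step R (\<zeta> @ \<delta>) a (\<zeta>' @ \<delta>)"
proof -
  obtain X \<zeta>1 where z: "\<zeta> = X # \<zeta>1" using assms(2) by (cases \<zeta>) auto
  from assms(1) obtain \<alpha> where "(X, a, \<alpha>) \<in> R" "u = \<alpha> @ \<zeta>1 @ \<gamma>"
    by (auto simp: z bpa_step_Cons)
  then show ?thesis
    using that[of "\<alpha> @ \<zeta>1"] by (auto simp: z bpa_step_Cons)
qed

lemma tau_path_mono:
  "tau_path R tau P x y \<Longrightarrow> (\<And>u. P u \<Longrightarrow> Q u) \<Longrightarrow> tau_path R tau Q x y"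
  by (induction rule: tau_path.induct) (auto intro: tau_path.intros)

lemma tau_path_trans:
  "tau_path R tau P x y \<Longrightarrow> tau_path R tau P y z \<Longrightarrow> tau_path R tau P x z"
  by (induction rule: tau_path.induct) (auto intro: tau_path.intros)

lemma tau_path_target:
  "tau_path R tau P x y \<Longrightarrow> P x \<Longrightarrow> P y"
  by (induction rule: tau_path.induct) auto

lemma tau_path_last_step:
  "tau_path R tau P x w \<Longrightarrow> x = w \<or> (\<exists>y. tau_path R tau P x y \<and> bpa_step R y tau w \<and> P w)"
proof (induction rule: tau_path.induct)
  case (tp_step t u w)
  then show ?case by (cases "u = w") (auto intro: tau_path.intros)
qed simp

lemma tau_path_NilD: "tau_path R tau P [] w \<Longrightarrow> w = []"
  by (erule tau_path.cases) auto

lemma tau_path_append_nonempty: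
  "tau_path R tau P s w \<Longrightarrow> s = \<beta> @ \<gamma> \<Longrightarrow> \<beta> \<noteq> [] \<Longrightarrow>
    (\<And>\<zeta>. P (\<zeta> @ \<gamma>) \<Longrightarrow> \<zeta> \<noteq> [] \<and> Q (\<zeta> @ \<delta>)) \<Longrightarrow>
    \<exists>\<zeta>. w = \<zeta> @ \<gamma> \<and> \<zeta> \<noteq> [] \<and> tau_path R tau Q (\<beta> @ \<delta>) (\<zeta> @ \<delta>)"
proof (induction arbitrary: \<beta> rule: tau_path.induct)
  case (tp_refl x)
  then show ?case by (blast intro: tau_path.tp_refl)
next
  case (tp_step x u w)
  obtain \<zeta>' where z: "u = \<zeta>' @ \<gamma>" "\<And>\<delta>. bpa_step R (\<beta> @ \<delta>) tau (\<zeta>' @ \<delta>)"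
    using bpa_step_append_nonempty[of R \<beta> \<gamma> tau u] tp_step.hyps(1) tp_step.prems(1,2) by blast
  have \<zeta>': "\<zeta>' \<noteq> []" "Q (\<zeta>' @ \<delta>)" using tp_step.hyps(2) tp_step.prems(3) z(1) by blast+
  obtain \<zeta> where "w = \<zeta> @ \<gamma>" "\<zeta> \<noteq> []" "tau_path R tau Q (\<zeta>' @ \<delta>) (\<zeta> @ \<delta>)"
    using tp_step.IH[OF z(1) \<zeta>'(1) tp_step.prems(3)] by blast
  moreover have "tau_path R tau Q (\<beta> @ \<delta>) (\<zeta> @ \<delta>)"
    by (rule tau_path.tp_step[where P = Q, OF z(2) \<zeta>'(2) calculation(3)])
  ultimately show ?case by blast
qed

lemma bb_transferD:
  assumes "bb_transfer R tau B" "(s, t) \<in> B" "B \<subseteq> B'" "bpa_step R s a s'"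
  shows "(a = tau \<and> (s', t) \<in> B') \<or>
        (\<exists>t'' t'. tau_path R tau (\<lambda>u. (s, u) \<in> B') t t'' \<and> bpa_step R t'' a t' \<and> (s', t') \<in> B')"
proof -
  from assms(1,2,4) have "(a = tau \<and> (s', t) \<in> B) \<or>
        (\<exists>t'' t'. tau_path R tau (\<lambda>u. (s, u) \<in> B) t t'' \<and> bpa_step R t'' a t' \<and> (s', t') \<in> B)"
    unfolding bb_transfer_def by blast
  then show ?thesis
  proof
    assume "a = tau \<and> (s', t) \<in> B" then show ?thesis using assms(3) by blast
  next
    assume "\<exists>t'' t'. tau_path R tau (\<lambda>u. (s, u) \<in> B) t t'' \<and> bpa_step R t'' a t' \<and> (s', t') \<in> B"
    then obtain t'' t' where p: "tau_path R tau (\<lambda>u. (s, u) \<in> B) t t''" "bpa_step R t'' a t'" "(s', t') \<in> B"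
      by blast
    have "tau_path R tau (\<lambda>u. (s, u) \<in> B') t t''"
      by (rule tau_path_mono[OF p(1)]) (use assms(3) in blast)
    then show ?thesis using p(2,3) assms(3) by blast
  qed
qed

lemma bb_transfer_Union:
  assumes "\<And>B. B \<in> S \<Longrightarrow> bb_transfer R tau B"
  shows "bb_transfer R tau (\<Union>S)"
  unfolding bb_transfer_def
proof (intro allI impI)
  fix s t a s' assume "(s, t) \<in> \<Union>S" "bpa_step R s a s'"
  then obtain B where "B \<in> S" "(s, t) \<in> B" by blast
  with bb_transferD[OF assms this(2) Union_upper \<open>bpa_step R s a s'\<close>]
  show "(a = tau \<and> (s', t) \<in> \<Union>S) \<or>
        (\<exists>t'' t'. tau_path R tau (\<lambda>u. (s, u) \<in> \<Union>S) t t'' \<and> bpa_step R t'' a t' \<and> (s', t') \<in> \<Union>S)"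
    by blast
qed

definition bbsim_rel :: "('v \<times> 'a \<times> 'v list) set \<Rightarrow> 'a \<Rightarrow> ('v list \<times> 'v list) set" where
  "bbsim_rel R tau = {(s, t). bbsim R tau s t}"

lemma branching_bisim_bbsim_rel: "branching_bisim R tau (bbsim_rel R tau)"
proof -
  let ?S = "{B. branching_bisim R tau B}"
  have eq: "bbsim_rel R tau = \<Union>?S" by (auto simp: bbsim_rel_def bbsim_def)
  have conv: "(bbsim_rel R tau)\<inverse> = \<Union>(converse ` ?S)" by (auto simp: bbsim_rel_def bbsim_def)
  have "bb_transfer R tau (\<Union>?S)"
    by (rule bb_transfer_Union) (simp add: branching_bisim_def)
  moreover have "bb_transfer R tau (\<Union>(converse ` ?S))"
    by (rule bb_transfer_Union) (auto simp: branching_bisim_def)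
  ultimately show ?thesis
    unfolding branching_bisim_def[of R tau "bbsim_rel R tau"] conv unfolding eq ..
qed

lemma bbsim_transfer_into:
  assumes "bbsim R tau s t" "bbsim_rel R tau \<subseteq> B'" "bpa_step R s a s'"
  shows "(a = tau \<and> (s', t) \<in> B') \<or>
    (\<exists>t'' t'. tau_path R tau (\<lambda>u. (s, u) \<in> B') t t'' \<and> bpa_step R t'' a t' \<and> (s', t') \<in> B')"
  using bb_transferD[of R tau "bbsim_rel R tau" s t B' a s'] branching_bisim_bbsim_rel[of R tau] assms
  by (auto simp: branching_bisim_def bbsim_rel_def)

lemma bbsim_transfer:
  assumes "bbsim R tau s t" "bpa_step R s a s'"
  shows "(a = tau \<and> bbsim R tau s' t) \<or>
    (\<exists>t'' t'. tau_path R tau (bbsim R tau s) t t'' \<and> bpa_step R t'' a t' \<and> bbsim R tau s' t')"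
  using bbsim_transfer_into[OF assms(1) order_refl assms(2)] by (simp add: bbsim_rel_def)

lemma bbsim_if_sym_transfer:
  assumes "sym B" "bb_transfer R tau B" "(s, t) \<in> B"
  shows "bbsim R tau s t"
proof -
  have "branching_bisim R tau B"
    using assms(1,2) by (simp add: branching_bisim_def sym_conv_converse_eq)
  then show ?thesis using assms(3) unfolding bbsim_def by blast
qed

lemma bbsim_refl: "bbsim R tau s s"
  by (rule bbsim_if_sym_transfer[of Id]) (auto simp: bb_transfer_def sym_Id intro: tau_path.intros)

lemma bbsim_sym: "bbsim R tau s t \<Longrightarrow> bbsim R tau t s"
  unfolding bbsim_def branching_bisim_def by (metis converseI converse_converse)

lemma bb_transfer_tau_path:
  assumes T2: "bb_transfer R tau B2"
  shows "tau_path R tau P t t'' \<Longrightarrow> P = (\<lambda>v. (s, v) \<in> B1) \<Longrightarrow> (s, t) \<in> B1 \<Longrightarrow> (t, u) \<in> B2 \<Longrightarrow>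
     \<exists>u''. tau_path R tau (\<lambda>w. (s, w) \<in> B1 O B2) u u'' \<and> (t'', u'') \<in> B2"
proof (induction arbitrary: u rule: tau_path.induct)
  case (tp_refl t)
  then show ?case by (auto intro: tau_path.intros)
next
  case (tp_step t v w)
  have sv: "(s, v) \<in> B1" using tp_step by simp
  from bb_transferD[OF T2 \<open>(t, u) \<in> B2\<close> order_refl \<open>bpa_step R t tau v\<close>]
  show ?case
  proof
    assume "tau = tau \<and> (v, u) \<in> B2"
    then show ?thesis using tp_step.IH[OF tp_step.prems(1) sv] by blast
  next
    assume "\<exists>t'' t'. tau_path R tau (\<lambda>x. (t, x) \<in> B2) u t'' \<and> bpa_step R t'' tau t' \<and> (v, t') \<in> B2"
    then obtain u1'' u1 where p: "tau_path R tau (\<lambda>x. (t, x) \<in> B2) u u1''"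
        "bpa_step R u1'' tau u1" "(v, u1) \<in> B2"
      by blast
    obtain u'' where q: "tau_path R tau (\<lambda>w. (s, w) \<in> B1 O B2) u1 u''" "(w, u'') \<in> B2"
      using tp_step.IH[OF tp_step.prems(1) sv p(3)] by blast
    have "tau_path R tau (\<lambda>w. (s, w) \<in> B1 O B2) u u1''"
      by (rule tau_path_mono[OF p(1)]) (use tp_step.prems(2) in blast)
    moreover have "tau_path R tau (\<lambda>w. (s, w) \<in> B1 O B2) u1'' u''"
      by (rule tau_path.tp_step[OF p(2)]) (use sv p(3) q(1) in blast)+
    ultimately show ?thesis using tau_path_trans[of R tau _ u u1'' u''] q(2) by blast
  qed
qed

lemma bb_transfer_relcomp:
  assumes T1: "bb_transfer R tau B1" and T2: "bb_transfer R tau B2"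
  shows "bb_transfer R tau (B1 O B2)"
  unfolding bb_transfer_def
proof (intro allI impI)
  fix s u a s'
  assume "(s, u) \<in> B1 O B2" "bpa_step R s a s'"
  then obtain t where st: "(s, t) \<in> B1" and tu: "(t, u) \<in> B2" by blast
  let ?Q = "\<lambda>w. (s, w) \<in> B1 O B2"
  from bb_transferD[OF T1 st order_refl \<open>bpa_step R s a s'\<close>]
  show "(a = tau \<and> (s', u) \<in> B1 O B2) \<or>
        (\<exists>t'' t'. tau_path R tau ?Q u t'' \<and> bpa_step R t'' a t' \<and> (s', t') \<in> B1 O B2)"
  proof
    assume "a = tau \<and> (s', t) \<in> B1" then show ?thesis using tu by blast
  next
    assume "\<exists>t'' t'. tau_path R tau (\<lambda>x. (s, x) \<in> B1) t t'' \<and> bpa_step R t'' a t' \<and> (s', t') \<in> B1"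
    then obtain t'' t' where h: "tau_path R tau (\<lambda>x. (s, x) \<in> B1) t t''"
        "bpa_step R t'' a t'" "(s', t') \<in> B1"
      by blast
    have st'': "(s, t'') \<in> B1" using tau_path_target[OF h(1)] st by simp
    obtain u'' where u: "tau_path R tau ?Q u u''" "(t'', u'') \<in> B2"
      using bb_transfer_tau_path[OF T2 h(1) refl st tu] by blast
    from bb_transferD[OF T2 u(2) order_refl h(2)]
    show ?thesis
    proof
      assume "a = tau \<and> (t', u'') \<in> B2"
      then show ?thesis using tau_path_last_step[OF u(1)] h(3) by blast
    next
      assume "\<exists>x y. tau_path R tau (\<lambda>w. (t'', w) \<in> B2) u'' x \<and> bpa_step R x a y \<and> (t', y) \<in> B2"
      then obtain x y where g: "tau_path R tau (\<lambda>w. (t'', w) \<in> B2) u'' x"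
          "bpa_step R x a y" "(t', y) \<in> B2"
        by blast
      have "tau_path R tau ?Q u'' x" by (rule tau_path_mono[OF g(1)]) (use st'' in blast)
      then show ?thesis using tau_path_trans[OF u(1)] g h(3) by blast
    qed
  qed
qed

lemma bbsim_trans: "bbsim R tau s t \<Longrightarrow> bbsim R tau t u \<Longrightarrow> bbsim R tau s u"
proof -
  assume "bbsim R tau s t" "bbsim R tau t u"
  then obtain B1 B2 where "branching_bisim R tau B1" "(s, t) \<in> B1" "branching_bisim R tau B2" "(t, u) \<in> B2"
    unfolding bbsim_def by blast
  moreover have "branching_bisim R tau (B1 O B2)" if "branching_bisim R tau B1" "branching_bisim R tau B2"
    using that bb_transfer_relcomp[of R tau B1 B2] bb_transfer_relcomp[of R tau "B2\<inverse>" "B1\<inverse>"]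
    by (simp add: branching_bisim_def converse_relcomp)
  ultimately show ?thesis unfolding bbsim_def by blast
qed

lemma bbsim_append_left:
  assumes "bbsim R tau s t"
  shows "bbsim R tau (\<zeta> @ s) (\<zeta> @ t)"
proof -
  define C where "C = {(\<zeta> @ s, \<zeta> @ t) | \<zeta> s t. bbsim R tau s t}"
  have sub: "bbsim_rel R tau \<subseteq> C" unfolding C_def bbsim_rel_def by force
  have "sym C" unfolding C_def sym_def by (auto intro: bbsim_sym)
  moreover have "bb_transfer R tau C"
    unfolding bb_transfer_def
  proof (intro allI impI)
    fix x y a x' assume "(x, y) \<in> C" "bpa_step R x a x'"
    then obtain \<zeta> s t where h: "x = \<zeta> @ s" "y = \<zeta> @ t" "bbsim R tau s t" unfolding C_def by blast
    show "(a = tau \<and> (x', y) \<in> C) \<or>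
        (\<exists>t'' t'. tau_path R tau (\<lambda>u. (x, u) \<in> C) y t'' \<and> bpa_step R t'' a t' \<and> (x', t') \<in> C)"
    proof (cases "\<zeta> = []")
      case True
      then show ?thesis using bbsim_transfer_into[OF h(3) sub] \<open>bpa_step R x a x'\<close> h by simp
    next
      case False
      then obtain \<zeta>' where "x' = \<zeta>' @ s" "bpa_step R y a (\<zeta>' @ t)"
        using bpa_step_append_nonempty \<open>bpa_step R x a x'\<close> h(1,2) by metis
      moreover have "(\<zeta>' @ s, \<zeta>' @ t) \<in> C" unfolding C_def using h(3) by blast
      ultimately show ?thesis by (blast intro: tau_path.tp_refl)
    qed
  qed
  moreover have "(\<zeta> @ s, \<zeta> @ t) \<in> C" using assms unfolding C_def by blast
  ultimately show ?thesis by (rule bbsim_if_sym_transfer)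
qed

abbreviation reach :: "('v \<times> 'a \<times> 'v list) set \<Rightarrow> 'v list \<Rightarrow> 'v list \<Rightarrow> bool" where
  "reach R \<equiv> (\<lambda>s t. \<exists>a. bpa_step R s a t)\<^sup>*\<^sup>*"

lemma reach_append: "reach R s t \<Longrightarrow> reach R (s @ \<beta>) (t @ \<beta>)"
proof (induction rule: rtranclp_induct)
  case (step y z)
  then show ?case by (metis (mono_tags, lifting) bpa_step_append rtranclp.rtrancl_into_rtrancl)
qed simp

lemma normed_reach_Nil: "normed R \<Longrightarrow> reach R s []"
proof (induction s)
  case (Cons X s)
  have "reach R ([X] @ s) ([] @ s)" using Cons.prems reach_append unfolding normed_def by blast
  then show ?case using Cons by simp
qed simp

inductive norm_path :: "('v \<times> 'a \<times> 'v list) set \<Rightarrow> 'a \<Rightarrow> 'v list \<Rightarrow> nat \<Rightarrow> bool" for R tau where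
  norm_path_Nil: "norm_path R tau [] 0"
| norm_path_step: "bpa_step R s a s' \<Longrightarrow> norm_path R tau s' k \<Longrightarrow>
     norm_path R tau s (if a = tau \<and> bbsim R tau s s' then k else Suc k)"

definition bnorm :: "('v \<times> 'a \<times> 'v list) set \<Rightarrow> 'a \<Rightarrow> 'v list \<Rightarrow> nat" where
  "bnorm R tau s = (LEAST k. norm_path R tau s k)"

lemma norm_path_exists: "normed R \<Longrightarrow> \<exists>k. norm_path R tau s k"
proof -
  assume "normed R"
  then have "reach R s []" by (rule normed_reach_Nil)
  then show ?thesis
    by (induction rule: converse_rtranclp_induct) (blast intro: norm_path.intros)+
qed

lemma bnorm_le: "norm_path R tau s k \<Longrightarrow> bnorm R tau s \<le> k"
  unfolding bnorm_def by (rule Least_le)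

lemma norm_path_bnorm: "normed R \<Longrightarrow> norm_path R tau s (bnorm R tau s)"
  unfolding bnorm_def by (rule LeastI_ex) (rule norm_path_exists)

lemma bnorm_Nil [simp]: "bnorm R tau [] = 0"
  using bnorm_le[OF norm_path_Nil] by simp

text \<open>Every path from \<open>\<eta> @ \<gamma>\<close> to \<open>[]\<close> passes through \<open>\<gamma>\<close>, and the steps before it cannot all be
  inert unless \<open>\<eta> @ \<gamma>\<close> is bisimilar to \<open>\<gamma>\<close>.\<close>

lemma norm_path_append:
  "norm_path R tau s k \<Longrightarrow> s = \<eta> @ \<gamma> \<Longrightarrow>
     bnorm R tau \<gamma> \<le> k \<and> (\<not> bbsim R tau (\<eta> @ \<gamma>) \<gamma> \<longrightarrow> bnorm R tau \<gamma> < k)"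
proof (induction arbitrary: \<eta> rule: norm_path.induct)
  case norm_path_Nil
  then show ?case by (simp add: bbsim_refl)
next
  case (norm_path_step s a s' k)
  show ?case
  proof (cases "\<eta> = []")
    case True
    then show ?thesis
      using bnorm_le[OF norm_path.norm_path_step[OF norm_path_step.hyps]] norm_path_step.prems
      by (simp add: bbsim_refl)
  next
    case False
    then obtain \<eta>' where s': "s' = \<eta>' @ \<gamma>"
      using bpa_step_append_nonempty norm_path_step.hyps(1) norm_path_step.prems by metis
    have IH: "bnorm R tau \<gamma> \<le> k" "\<not> bbsim R tau (\<eta>' @ \<gamma>) \<gamma> \<Longrightarrow> bnorm R tau \<gamma> < k"
      using norm_path_step.IH[OF s'] by blast+
    have "\<not> bbsim R tau (\<eta>' @ \<gamma>) \<gamma>"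
      if "\<not> bbsim R tau (\<eta> @ \<gamma>) \<gamma>" "bbsim R tau s s'"
      using that bbsim_trans[of R tau "\<eta> @ \<gamma>" "\<eta>' @ \<gamma>" \<gamma>] norm_path_step.prems s' by blast
    then show ?thesis using IH by (cases "a = tau \<and> bbsim R tau s s'") auto
  qed
qed

lemma bnorm_append_le: "normed R \<Longrightarrow> bnorm R tau \<gamma> \<le> bnorm R tau (\<eta> @ \<gamma>)"
  using norm_path_append[OF norm_path_bnorm refl] by (rule conjunct1)

lemma bnorm_append_less:
  assumes "normed R" "\<not> bbsim R tau (\<eta> @ \<gamma>) \<gamma>"
  shows "bnorm R tau \<gamma> < bnorm R tau (\<eta> @ \<gamma>)"
  using norm_path_append[OF norm_path_bnorm[OF assms(1)] refl] assms(2) by blast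

lemma norm_path_0_if_bbsim_Nil:
  assumes "normed R" "bbsim R tau s []"
  shows "norm_path R tau s 0"
proof -
  have "reach R s []" using assms(1) by (rule normed_reach_Nil)
  then show ?thesis using assms(2)
  proof (induction rule: converse_rtranclp_induct)
    case base show ?case by (rule norm_path_Nil)
  next
    case (step y z)
    then obtain a where yz: "bpa_step R y a z" by blast
    have "\<not> (\<exists>t'' t'. tau_path R tau (bbsim R tau y) [] t'' \<and> bpa_step R t'' a t')"
      by (metis bpa_step_Nil tau_path_NilD)
    then have "a = tau" and z: "bbsim R tau z []"
      using bbsim_transfer[OF step.prems yz] by blast+
    moreover have "bbsim R tau y z" using bbsim_trans[OF step.prems bbsim_sym[OF z]] .
    ultimately show ?case using norm_path_step[OF yz step.IH[OF z]] by simp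
  qed
qed

lemma norm_path_inert_prefix:
  "tau_path R tau P x y \<Longrightarrow> P = bbsim R tau t \<Longrightarrow> bbsim R tau t x \<Longrightarrow> norm_path R tau y m \<Longrightarrow>
    norm_path R tau x m"
proof (induction rule: tau_path.induct)
  case (tp_step x u w)
  have tu: "bbsim R tau t u" using tp_step.hyps(2) tp_step.prems(1) by simp
  have "norm_path R tau u m" using tp_step.IH[OF tp_step.prems(1) tu tp_step.prems(3)] .
  moreover have "bbsim R tau x u" using bbsim_trans[OF bbsim_sym[OF tp_step.prems(2)] tu] .
  ultimately show ?case using norm_path_step[OF tp_step.hyps(1)] by fastforce
qed simp

lemma norm_path_bbsim:
  assumes "normed R"
  shows "norm_path R tau t k \<Longrightarrow> bbsim R tau s t \<Longrightarrow> \<exists>k'\<le>k. norm_path R tau s k'"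
proof (induction arbitrary: s rule: norm_path.induct)
  case norm_path_Nil
  then show ?case using norm_path_0_if_bbsim_Nil[OF assms] by blast
next
  case (norm_path_step t a t' k)
  let ?k = "if a = tau \<and> bbsim R tau t t' then k else Suc k"
  have ts: "bbsim R tau t s" using bbsim_sym[OF norm_path_step.prems] .
  from bbsim_transfer[OF ts norm_path_step.hyps(1)] show ?case
  proof
    assume "a = tau \<and> bbsim R tau t' s"
    then obtain k' where "k' \<le> k" "norm_path R tau s k'"
      using norm_path_step.IH[OF bbsim_sym] by blast
    then show ?thesis by (intro exI[of _ k']) auto
  next
    assume "\<exists>s'' s'. tau_path R tau (bbsim R tau t) s s'' \<and> bpa_step R s'' a s' \<and> bbsim R tau t' s'"
    then obtain s'' s' where h: "tau_path R tau (bbsim R tau t) s s''" "bpa_step R s'' a s'"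
        "bbsim R tau t' s'"
      by blast
    obtain k'' where k'': "k'' \<le> k" "norm_path R tau s' k''"
      using norm_path_step.IH[OF bbsim_sym[OF h(3)]] by blast
    let ?m = "if a = tau \<and> bbsim R tau s'' s' then k'' else Suc k''"
    have "norm_path R tau s'' ?m" by (rule norm_path.norm_path_step[OF h(2) k''(2)])
    then have "norm_path R tau s ?m" by (rule norm_path_inert_prefix[OF h(1) refl ts])
    moreover have "bbsim R tau s'' s'" if "bbsim R tau t t'"
    proof -
      have "bbsim R tau s'' t" using bbsim_sym[OF tau_path_target[OF h(1) ts]] .
      then show ?thesis using bbsim_trans[OF _ bbsim_trans[OF that h(3)]] by blast
    qed
    then have "?m \<le> ?k" using k''(1) by auto
    ultimately show ?thesis by blast
  qed
qed

lemma bnorm_bbsim_le: "normed R \<Longrightarrow> bbsim R tau s t \<Longrightarrow> bnorm R tau s \<le> bnorm R tau t"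
  using norm_path_bbsim[OF _ norm_path_bnorm] bnorm_le le_trans by metis

lemma bbsim_absorbed_tail:
  assumes "normed R" "bbsim R tau (X # \<eta> @ \<gamma>) \<gamma>"
  shows "bbsim R tau (\<eta> @ \<gamma>) \<gamma>"
proof (rule ccontr)
  assume "\<not> bbsim R tau (\<eta> @ \<gamma>) \<gamma>"
  then have "bnorm R tau \<gamma> < bnorm R tau (\<eta> @ \<gamma>)" by (rule bnorm_append_less[OF assms(1)])
  also have "\<dots> \<le> bnorm R tau ([X] @ \<eta> @ \<gamma>)" by (rule bnorm_append_le[OF assms(1)])
  also have "\<dots> \<le> bnorm R tau \<gamma>" using bnorm_bbsim_le[OF assms] by simp
  finally show False by simp
qed

lemma bbsim_absorbed_iff:
  assumes "normed R"
  shows "bbsim R tau (\<zeta> @ \<gamma>) \<gamma> \<longleftrightarrow> set \<zeta> \<subseteq> Rset R tau \<gamma>"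
proof (induction \<zeta>)
  case Nil
  then show ?case by (simp add: bbsim_refl)
next
  case (Cons X \<eta>)
  show ?case
  proof
    assume X\<eta>: "bbsim R tau ((X # \<eta>) @ \<gamma>) \<gamma>"
    then have \<eta>: "bbsim R tau (\<eta> @ \<gamma>) \<gamma>" using bbsim_absorbed_tail[OF assms] by simp
    then have "bbsim R tau (X # \<eta> @ \<gamma>) (X # \<gamma>)" using bbsim_append_left[of R tau _ _ "[X]"] by simp
    then have "bbsim R tau (X # \<gamma>) \<gamma>" using X\<eta> bbsim_sym bbsim_trans by (metis append_Cons)
    then show "set (X # \<eta>) \<subseteq> Rset R tau \<gamma>" using Cons.IH \<eta> by (simp add: Rset_def)
  next
    assume "set (X # \<eta>) \<subseteq> Rset R tau \<gamma>"
    then have "bbsim R tau (\<eta> @ \<gamma>) \<gamma>" "bbsim R tau (X # \<gamma>) \<gamma>" using Cons.IH by (auto simp: Rset_def)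
    then show "bbsim R tau ((X # \<eta>) @ \<gamma>) \<gamma>"
      using bbsim_append_left[of R tau _ _ "[X]"] bbsim_trans by fastforce
  qed
qed

lemma bbsim_transfer_replace_suffix:
  assumes sim: "bbsim R tau (\<alpha> @ \<gamma>) (\<beta> @ \<gamma>)" and not_absorbed: "\<not> bbsim R tau (\<alpha> @ \<gamma>) \<gamma>"
    and step: "bpa_step R (\<alpha> @ \<delta>) a x'"
    and B: "\<And>\<zeta> \<zeta>'. bbsim R tau (\<zeta> @ \<gamma>) (\<zeta>' @ \<gamma>) \<Longrightarrow> (\<zeta> @ \<delta>, \<zeta>' @ \<delta>) \<in> B"
  shows "(a = tau \<and> (x', \<beta> @ \<delta>) \<in> B) \<or>
    (\<exists>t'' t'. tau_path R tau (\<lambda>u. (\<alpha> @ \<delta>, u) \<in> B) (\<beta> @ \<delta>) t'' \<and> bpa_step R t'' a t' \<and> (x', t') \<in> B)"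
proof -
  have nonempty: "\<zeta> \<noteq> []" if "bbsim R tau (\<alpha> @ \<gamma>) (\<zeta> @ \<gamma>)" for \<zeta>
    using that not_absorbed by auto
  have "\<alpha> \<noteq> []" using nonempty[OF bbsim_refl] .
  then obtain \<alpha>' where x': "x' = \<alpha>' @ \<delta>" and step\<alpha>: "\<And>\<delta>'. bpa_step R (\<alpha> @ \<delta>') a (\<alpha>' @ \<delta>')"
    by (rule bpa_step_append_nonempty[OF step]) (rule that)
  from bbsim_transfer[OF sim step\<alpha>] show ?thesis
  proof
    assume "a = tau \<and> bbsim R tau (\<alpha>' @ \<gamma>) (\<beta> @ \<gamma>)"
    then show ?thesis using B x' by blast
  next
    assume "\<exists>t'' t'. tau_path R tau (bbsim R tau (\<alpha> @ \<gamma>)) (\<beta> @ \<gamma>) t'' \<and>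
      bpa_step R t'' a t' \<and> bbsim R tau (\<alpha>' @ \<gamma>) t'"
    then obtain t'' t' where p: "tau_path R tau (bbsim R tau (\<alpha> @ \<gamma>)) (\<beta> @ \<gamma>) t''"
        "bpa_step R t'' a t'" "bbsim R tau (\<alpha>' @ \<gamma>) t'"
      by blast
    have above: "\<zeta> \<noteq> [] \<and> (\<alpha> @ \<delta>, \<zeta> @ \<delta>) \<in> B" if "bbsim R tau (\<alpha> @ \<gamma>) (\<zeta> @ \<gamma>)" for \<zeta>
      using nonempty[OF that] B[OF that] ..
    \<comment> \<open>the \<open>\<tau>\<close>-path answering the move never touches \<open>\<gamma>\<close>, so it can be replayed above \<open>\<delta>\<close>\<close>
    obtain \<zeta> where \<zeta>: "t'' = \<zeta> @ \<gamma>" "\<zeta> \<noteq> []" "tau_path R tau (\<lambda>u. (\<alpha> @ \<delta>, u) \<in> B) (\<beta> @ \<delta>) (\<zeta> @ \<delta>)"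
      using tau_path_append_nonempty[where Q = "\<lambda>u. (\<alpha> @ \<delta>, u) \<in> B" and \<delta> = \<delta>,
          OF p(1) refl nonempty[OF sim] above]
      by blast
    obtain \<zeta>' where "t' = \<zeta>' @ \<gamma>" "\<And>\<delta>'. bpa_step R (\<zeta> @ \<delta>') a (\<zeta>' @ \<delta>')"
      by (rule bpa_step_append_nonempty[OF p(2)[unfolded \<zeta>(1)] \<zeta>(2)]) (rule that)
    moreover have "(x', \<zeta>' @ \<delta>) \<in> B" using B p(3) x' calculation(1) by blast
    ultimately show ?thesis using \<zeta>(3) by blast
  qed
qed

lemma bbsim_append_Rset_cong:
  assumes normed: "normed R" and eq: "Rset R tau \<gamma> = Rset R tau \<delta>"
    and sim: "bbsim R tau (\<alpha> @ \<gamma>) (\<beta> @ \<gamma>)"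
  shows "bbsim R tau (\<alpha> @ \<delta>) (\<beta> @ \<delta>)"
proof -
  define B where "B = {(\<zeta> @ \<delta>, \<zeta>' @ \<delta>) | \<zeta> \<zeta>'. bbsim R tau (\<zeta> @ \<gamma>) (\<zeta>' @ \<gamma>)} \<union> bbsim_rel R tau"
  have sub: "bbsim_rel R tau \<subseteq> B" unfolding B_def by blast
  have shift: "(\<zeta> @ \<delta>, \<zeta>' @ \<delta>) \<in> B" if "bbsim R tau (\<zeta> @ \<gamma>) (\<zeta>' @ \<gamma>)" for \<zeta> \<zeta>'
    unfolding B_def using that by blast
  have "sym B" unfolding B_def bbsim_rel_def sym_def by (auto intro: bbsim_sym)
  moreover have "bb_transfer R tau B"
    unfolding bb_transfer_def
  proof (intro allI impI)
    fix x y a x' assume "(x, y) \<in> B" and step: "bpa_step R x a x'"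
    show "(a = tau \<and> (x', y) \<in> B) \<or>
        (\<exists>t'' t'. tau_path R tau (\<lambda>u. (x, u) \<in> B) y t'' \<and> bpa_step R t'' a t' \<and> (x', t') \<in> B)"
    proof (cases "bbsim R tau x y")
      case True
      then show ?thesis using bbsim_transfer_into[OF _ sub step] by blast
    next
      case False
      then obtain \<zeta> \<zeta>' where xy: "x = \<zeta> @ \<delta>" "y = \<zeta>' @ \<delta>" "bbsim R tau (\<zeta> @ \<gamma>) (\<zeta>' @ \<gamma>)"
        using \<open>(x, y) \<in> B\<close> unfolding B_def bbsim_rel_def by blast
      have not_absorbed: "\<not> bbsim R tau (\<zeta> @ \<gamma>) \<gamma>"
      proof
        assume "bbsim R tau (\<zeta> @ \<gamma>) \<gamma>"
        moreover from this have "bbsim R tau (\<zeta>' @ \<gamma>) \<gamma>" by (rule bbsim_trans[OF bbsim_sym[OF xy(3)]])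
        ultimately have "bbsim R tau (\<zeta> @ \<delta>) \<delta>" "bbsim R tau (\<zeta>' @ \<delta>) \<delta>"
          by (simp_all add: bbsim_absorbed_iff[OF normed] eq)
        then have "bbsim R tau x y" unfolding xy(1,2) by (rule bbsim_trans[OF _ bbsim_sym])
        then show False using False by contradiction
      qed
      show ?thesis
        unfolding xy(1,2)
        by (rule bbsim_transfer_replace_suffix[OF xy(3) not_absorbed step[unfolded xy(1)] shift])
    qed
  qed
  moreover have "(\<alpha> @ \<delta>, \<beta> @ \<delta>) \<in> B" using shift[OF sim] .
  ultimately show ?thesis by (rule bbsim_if_sym_transfer)
qed

lemma bbsim_append_Rset_iff:
  assumes "normed R" "Rset R tau \<gamma> = Rset R tau \<delta>"
  shows "bbsim R tau (\<alpha> @ \<gamma>) (\<beta> @ \<gamma>) \<longleftrightarrow> bbsim R tau (\<alpha> @ \<delta>) (\<beta> @ \<delta>)"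
  using bbsim_append_Rset_cong[OF assms] bbsim_append_Rset_cong[OF assms(1) assms(2)[symmetric]] by blast

lemma Rset_Cons_cong:
  assumes "normed R" "Rset R tau \<gamma> = Rset R tau \<delta>"
  shows "Rset R tau (A # \<gamma>) = Rset R tau (A # \<delta>)"
  unfolding Rset_def using bbsim_append_Rset_iff[OF assms, of "[_, A]" "[A]"] by auto

lemma redundancy_free_ConsD:
  assumes "redundancy_free R tau (X # \<alpha>) \<gamma>"
  shows "redundancy_free R tau \<alpha> \<gamma>" "\<not> bbsim R tau (X # \<alpha> @ \<gamma>) (\<alpha> @ \<gamma>)"
proof -
  show "redundancy_free R tau \<alpha> \<gamma>"
    using assms unfolding redundancy_free_def by (metis append_Cons)
  show "\<not> bbsim R tau (X # \<alpha> @ \<gamma>) (\<alpha> @ \<gamma>)"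
    using assms unfolding redundancy_free_def by (metis append_Nil)
qed

lemma bnorm_redundancy_free:
  assumes "normed R"
  shows "redundancy_free R tau \<alpha> \<gamma> \<Longrightarrow> bnorm R tau \<gamma> + length \<alpha> \<le> bnorm R tau (\<alpha> @ \<gamma>)"
proof (induction \<alpha>)
  case (Cons X \<alpha>)
  note rf = redundancy_free_ConsD[OF Cons.prems]
  have "bnorm R tau \<gamma> + length \<alpha> \<le> bnorm R tau (\<alpha> @ \<gamma>)" using Cons.IH[OF rf(1)] .
  also have "\<dots> < bnorm R tau ([X] @ \<alpha> @ \<gamma>)" using bnorm_append_less[OF assms, where \<eta> = "[X]"] rf(2) by simp
  finally show ?case by simp
qed simp

lemma cand_length_le:
  assumes "normed R" "\<alpha> \<in> cand R tau A \<gamma>"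
  shows "length \<alpha> \<le> bnorm R tau (A # \<gamma>)"
proof -
  have "bbsim R tau (\<alpha> @ \<gamma>) (A # \<gamma>)" "redundancy_free R tau \<alpha> \<gamma>"
    using assms(2) unfolding cand_def by blast+
  then show ?thesis
    using bnorm_redundancy_free[OF assms(1)] bnorm_bbsim_le[OF assms(1)] by fastforce
qed

lemma finite_cand:
  assumes "normed R"
  shows "finite (cand R tau A (\<gamma> :: 'v::finite list))"
proof (rule finite_subset)
  show "cand R tau A \<gamma> \<subseteq> {xs. set xs \<subseteq> UNIV \<and> length xs \<le> bnorm R tau (A # \<gamma>)}"
    using cand_length_le[OF assms] by blast
  show "finite {xs :: 'v list. set xs \<subseteq> UNIV \<and> length xs \<le> bnorm R tau (A # \<gamma>)}"
    by (rule finite_lists_length_le) simp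
qed

lemma cand_nonempty: "cand R tau A \<gamma> \<noteq> {}"
proof (cases "bbsim R tau (A # \<gamma>) \<gamma>")
  case True
  then have "[] \<in> cand R tau A \<gamma>"
    unfolding cand_def redundancy_free_def by (auto intro: bbsim_sym)
  then show ?thesis by blast
next
  case False
  have "[A] \<in> cand R tau A \<gamma>"
    unfolding cand_def redundancy_free_def
  proof (intro CollectI conjI notI)
    show "bbsim R tau ([A] @ \<gamma>) (A # \<gamma>)" by (simp add: bbsim_refl)
    assume "\<exists>\<delta> X \<beta>. [A] = \<delta> @ X # \<beta> \<and> bbsim R tau (X # \<beta> @ \<gamma>) (\<beta> @ \<gamma>)"
    then obtain \<delta> X \<beta> where "[A] = \<delta> @ X # \<beta>" "bbsim R tau (X # \<beta> @ \<gamma>) (\<beta> @ \<gamma>)" by blast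
    then show False using False by (cases \<delta>) auto
  qed
  then show ?thesis by blast
qed

lemma cand_Rset_cong:
  assumes "normed R" "Rset R tau \<gamma> = Rset R tau \<delta>"
  shows "cand R tau A \<gamma> = cand R tau A \<delta>"
proof -
  have "bbsim R tau (\<alpha> @ \<gamma>) (A # \<gamma>) \<longleftrightarrow> bbsim R tau (\<alpha> @ \<delta>) (A # \<delta>)" for \<alpha>
    using bbsim_append_Rset_iff[OF assms, of \<alpha> "[A]"] by simp
  moreover have "bbsim R tau (X # \<beta> @ \<gamma>) (\<beta> @ \<gamma>) \<longleftrightarrow> bbsim R tau (X # \<beta> @ \<delta>) (\<beta> @ \<delta>)" for X \<beta>
    using bbsim_append_Rset_iff[OF assms, of "X # \<beta>" \<beta>] by simp
  ultimately show ?thesis unfolding cand_def redundancy_free_def by auto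
qed

lemma lex_smaller_iff_rev_less:
  fixes \<alpha> \<beta> :: "'v::linorder list"
  assumes "length \<alpha> = length \<beta>"
  shows "lex_smaller \<alpha> \<beta> \<longleftrightarrow> rev \<alpha> < rev \<beta>"
proof
  assume "lex_smaller \<alpha> \<beta>"
  then obtain \<alpha>' \<beta>' A B \<gamma> where h: "\<alpha> = \<alpha>' @ A # \<gamma>" "\<beta> = \<beta>' @ B # \<gamma>" "A < B"
    using assms unfolding lex_smaller_def by auto
  then have "rev \<alpha> = rev \<gamma> @ A # rev \<alpha>'" "rev \<beta> = rev \<gamma> @ B # rev \<beta>'" by simp_all
  then show "rev \<alpha> < rev \<beta>" unfolding list_less_def lexord_def using h(3) by blast
next
  assume "rev \<alpha> < rev \<beta>"
  then have "\<exists>a v. rev \<beta> = rev \<alpha> @ a # v \<or>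
      (\<exists>u a b v w. a < b \<and> rev \<alpha> = u @ a # v \<and> rev \<beta> = u @ b # w)"
    unfolding list_less_def lexord_def by blast
  then obtain u a b v w where h: "a < b" "rev \<alpha> = u @ a # v" "rev \<beta> = u @ b # w"
    using assms by (metis add_Suc_right add_cancel_left_right length_Cons length_append length_rev nat.distinct(1))
  then have "\<alpha> = rev v @ a # rev u" "\<beta> = rev w @ b # rev u"
    by (metis rev_append rev_rev_ident rev.simps(2) append.assoc append_Cons append_Nil)+
  then show "lex_smaller \<alpha> \<beta>" unfolding lex_smaller_def using h(1) by blast
qed

lemma ex1_longest_lex_least:
  fixes S :: "'v::linorder list set"
  assumes "finite S" "S \<noteq> {}"
  shows "\<exists>!\<alpha>. \<alpha> \<in> S \<and> (\<forall>\<beta>\<in>S. length \<beta> \<le> length \<alpha>) \<and>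
           (\<forall>\<beta>\<in>S. length \<beta> = length \<alpha> \<longrightarrow> \<beta> \<noteq> \<alpha> \<longrightarrow> lex_smaller \<alpha> \<beta>)"
    (is "\<exists>!\<alpha>. ?P \<alpha>")
proof -
  define longest where "longest = {\<beta>\<in>S. length \<beta> = Max (length ` S)}"
  have "Max (length ` S) \<in> length ` S" using assms by simp
  then have "finite (rev ` longest)" "rev ` longest \<noteq> {}"
    unfolding longest_def using assms(1) by auto
  then have "Min (rev ` longest) \<in> rev ` longest" "\<And>\<beta>. \<beta> \<in> longest \<Longrightarrow> Min (rev ` longest) \<le> rev \<beta>"
    by simp_all
  then obtain \<alpha> where \<alpha>: "\<alpha> \<in> longest" and least: "\<And>\<beta>. \<beta> \<in> longest \<Longrightarrow> rev \<alpha> \<le> rev \<beta>"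
    by auto
  have "?P \<alpha>"
  proof (intro conjI ballI impI)
    show "\<alpha> \<in> S" using \<alpha> by (simp add: longest_def)
    show "length \<beta> \<le> length \<alpha>" if "\<beta> \<in> S" for \<beta>
      using that \<alpha> assms(1) by (simp add: longest_def)
    show "lex_smaller \<alpha> \<beta>" if "\<beta> \<in> S" "length \<beta> = length \<alpha>" "\<beta> \<noteq> \<alpha>" for \<beta>
    proof -
      have "rev \<alpha> < rev \<beta>" using that \<alpha> least[of \<beta>] by (auto simp: longest_def order.strict_iff_order)
      then show ?thesis using that(2) by (simp add: lex_smaller_iff_rev_less)
    qed
  qed
  moreover have "\<alpha>' = \<alpha>''" if "?P \<alpha>'" "?P \<alpha>''" for \<alpha>' \<alpha>''
  proof -
    have "length \<alpha>' = length \<alpha>''" using that by (meson le_antisym)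
    moreover have "\<not> (rev \<alpha>' < rev \<alpha>'' \<and> rev \<alpha>'' < rev \<alpha>')" by auto
    ultimately show ?thesis using that lex_smaller_iff_rev_less by metis
  qed
  ultimately show ?thesis by blast
qed

theorem mainTheorem10:
  fixes R :: "('v::{finite,linorder} \<times> 'a \<times> 'v list) set" and tau :: 'a
  assumes "finite R"
    and "normed R"
  shows "(\<forall>\<gamma> \<delta>. Rset R tau \<gamma> = Rset R tau \<delta> \<longrightarrow>
            (\<forall>A. Rset R tau (A # \<gamma>) = Rset R tau (A # \<delta>)) \<and>
            (\<forall>\<alpha> \<beta>. bbsim R tau (\<alpha> @ \<gamma>) (\<beta> @ \<gamma>) \<longleftrightarrow> bbsim R tau (\<alpha> @ \<delta>) (\<beta> @ \<delta>)))
       \<and> (\<forall>A \<gamma>. finite (cand R tau A \<gamma>) \<and> cand R tau A \<gamma> \<noteq> {} \<and>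
            (\<forall>\<delta>. Rset R tau \<gamma> = Rset R tau \<delta> \<longrightarrow> cand R tau A \<gamma> = cand R tau A \<delta>))
       \<and> (\<forall>A \<gamma>. \<exists>!\<alpha>. transducer_output R tau A \<gamma> \<alpha>)"
proof (intro conjI allI impI)
  fix \<gamma> \<delta> :: "'v list" assume eq: "Rset R tau \<gamma> = Rset R tau \<delta>"
  show "Rset R tau (A # \<gamma>) = Rset R tau (A # \<delta>)" for A
    by (rule Rset_Cons_cong[OF assms(2) eq])
  show "bbsim R tau (\<alpha> @ \<gamma>) (\<beta> @ \<gamma>) \<longleftrightarrow> bbsim R tau (\<alpha> @ \<delta>) (\<beta> @ \<delta>)" for \<alpha> \<beta>
    by (rule bbsim_append_Rset_iff[OF assms(2) eq])
next
  fix A and \<gamma> :: "'v list"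
  show "finite (cand R tau A \<gamma>)" by (rule finite_cand[OF assms(2)])
  show "cand R tau A \<gamma> \<noteq> {}" by (rule cand_nonempty)
  show "cand R tau A \<gamma> = cand R tau A \<delta>" if "Rset R tau \<gamma> = Rset R tau \<delta>" for \<delta>
    by (rule cand_Rset_cong[OF assms(2) that])
  show "\<exists>!\<alpha>. transducer_output R tau A \<gamma> \<alpha>"
    unfolding transducer_output_def
    by (rule ex1_longest_lex_least[OF finite_cand[OF assms(2)] cand_nonempty])
qed

end
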